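(* Let $(b,c)$ be a connected graph over a countable set $X$ with Schrödinger operator $H=H_{b,c}$, and fix $x_0\in X$. Then $\mathcal{S}^+_1=\{f\in\mathcal{S}^+: f(x_0)=1\}$ is compact with respect to the product topology on $\mathbb{R}^X$.
   Context: A graph over $X$ is $(b,c)$ with $b:X\times X\to[0,\infty)$, $c:X\to\mathbb{R}$, $\sum_yb(x,y)<\infty$ for all $x$ ($b$ need not be symmetric); connected: any $x,z$ are joined by a finite sequence $y_1,\dots,y_n$ with $b(y_i,y_{i+1})>0$. $H_{b,c}f(x)=\sum_yb(x,y)(f(x)-f(y))+c(x)f(x)$ on $\mathrm{Dom}(H)=\{f:\sum_yb(x,y)|f(y)|<\infty\ \forall x\}$. $\mathcal{S}^+$ is the set of nonnegative, not identically zero $f\in\mathrm{Dom}(H)$ with $Hf\ge0$. *)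

theory Defs
  imports "HOL-Analysis.Analysis"
begin

definition is_graph :: "('a \<Rightarrow> 'a \<Rightarrow> real) \<Rightarrow> ('a \<Rightarrow> real) \<Rightarrow> bool" where
  "is_graph b c \<longleftrightarrow> (\<forall>x y. b x y \<ge> 0) \<and> (\<forall>x. (\<lambda>y. b x y) summable_on UNIV)"

definition graph_connected :: "('a \<Rightarrow> 'a \<Rightarrow> real) \<Rightarrow> bool" where
  "graph_connected b \<longleftrightarrow> (\<forall>x z. (\<lambda>u v. b u v > 0)\<^sup>*\<^sup>* x z)"

definition dom_H :: "('a \<Rightarrow> 'a \<Rightarrow> real) \<Rightarrow> ('a \<Rightarrow> real) set" where
  "dom_H b = {f. \<forall>x. (\<lambda>y. b x y * \<bar>f y\<bar>) summable_on UNIV}"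

definition schroedinger_op :: "('a \<Rightarrow> 'a \<Rightarrow> real) \<Rightarrow> ('a \<Rightarrow> real) \<Rightarrow> ('a \<Rightarrow> real) \<Rightarrow> 'a \<Rightarrow> real" where
  "schroedinger_op b c f x = (\<Sum>\<^sub>\<infinity>y. b x y * (f x - f y)) + c x * f x"

definition S_plus :: "('a \<Rightarrow> 'a \<Rightarrow> real) \<Rightarrow> ('a \<Rightarrow> real) \<Rightarrow> ('a \<Rightarrow> real) set" where
  "S_plus b c = {f. (\<forall>x. f x \<ge> 0) \<and> (\<exists>x. f x \<noteq> 0) \<and> f \<in> dom_H b
                   \<and> (\<forall>x. schroedinger_op b c f x \<ge> 0)}"

end

theory Submission
  imports Defs
begin

text \<open>For nonnegative f, the conditions f \<in> Dom(H) and Hf(x) \<ge> 0 amount to asking that every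
  finite partial sum of the series of b(x,y) f(y) be at most (deg x + c(x)) f(x), where
  deg x is the sum of b(x,y) over y. These are closed conditions in the product topology.
  The one-term partial sum at a neighbour y of x gives f(y) \<le> C f(x) with C independent of f;
  chained along paths from x0 these bounds make the normalized cone pointwise bounded, so it is
  a closed subset of a product of compact intervals.\<close>

lemma compact_if_closed_pointwise_bounded:
  fixes S :: "('a \<Rightarrow> real) set"
  assumes "closed S" and "\<And>z. \<exists>C. \<forall>f\<in>S. \<bar>f z\<bar> \<le> C"
  shows "compact S"
proof -
  obtain C where C: "\<And>z f. f \<in> S \<Longrightarrow> \<bar>f z\<bar> \<le> C z"
    using assms(2) by metis
  have "compactin (product_topology (\<lambda>_. euclidean) UNIV) (PiE UNIV (\<lambda>z. {- C z..C z}))"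
    by (simp add: compactin_PiE)
  then have "compact (PiE UNIV (\<lambda>z. {- C z..C z}))"
    by (simp add: euclidean_product_topology)
  then have "compact (PiE UNIV (\<lambda>z. {- C z..C z}) \<inter> S)"
    using assms(1) by (rule compact_Int_closed)
  moreover have "S \<subseteq> PiE UNIV (\<lambda>z. {- C z..C z})"
    using C by (force simp: PiE_UNIV_domain abs_le_iff)
  ultimately show ?thesis
    by (simp add: Int_absorb1)
qed

lemma schroedinger_op_eq:
  assumes "(\<lambda>y. b x y) summable_on UNIV" and "(\<lambda>y. b x y * f y) summable_on UNIV"
  shows "schroedinger_op b c f x
           = ((\<Sum>\<^sub>\<infinity>y. b x y) + c x) * f x - (\<Sum>\<^sub>\<infinity>y. b x y * f y)"
proof -
  have "(\<Sum>\<^sub>\<infinity>y. b x y * (f x - f y)) = (\<Sum>\<^sub>\<infinity>y. b x y * f x + - (b x y * f y))"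
    by (simp add: algebra_simps)
  also have "\<dots> = (\<Sum>\<^sub>\<infinity>y. b x y * f x) + (\<Sum>\<^sub>\<infinity>y. - (b x y * f y))"
    using assms by (intro infsum_add summable_on_cmult_left) (simp_all add: summable_on_uminus)
  also have "\<dots> = (\<Sum>\<^sub>\<infinity>y. b x y) * f x - (\<Sum>\<^sub>\<infinity>y. b x y * f y)"
    by (simp add: infsum_cmult_left' infsum_uminus)
  finally show ?thesis
    unfolding schroedinger_op_def by (simp add: algebra_simps)
qed

lemma schroedinger_op_nonneg_iff_finite_sums:
  assumes "is_graph b c" and "\<And>y. f y \<ge> 0"
  shows "((\<lambda>y. b x y * f y) summable_on UNIV \<and> schroedinger_op b c f x \<ge> 0)
     \<longleftrightarrow> (\<forall>F. finite F \<longrightarrow> (\<Sum>y\<in>F. b x y * f y) \<le> ((\<Sum>\<^sub>\<infinity>y. b x y) + c x) * f x)"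
    (is "?summable \<and> _ \<longleftrightarrow> (\<forall>F. finite F \<longrightarrow> ?partial F \<le> ?bound)")
proof -
  have row: "(\<lambda>y. b x y) summable_on UNIV" and terms_nonneg: "\<And>y. b x y * f y \<ge> 0"
    using assms unfolding is_graph_def by auto
  show ?thesis
  proof safe
    fix F :: "'a set"
    assume "?summable" "schroedinger_op b c f x \<ge> 0" "finite F"
    then have "?partial F \<le> (\<Sum>\<^sub>\<infinity>y. b x y * f y)"
      using terms_nonneg by (intro finite_sum_le_infsum) auto
    also have "\<dots> \<le> ?bound"
      using \<open>schroedinger_op b c f x \<ge> 0\<close>
        schroedinger_op_eq[where b = b and x = x, OF row \<open>?summable\<close>]
      by simp
    finally show "?partial F \<le> ?bound" .
  next
    assume partial: "\<forall>F. finite F \<longrightarrow> ?partial F \<le> ?bound"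
    show "?summable"
      using terms_nonneg partial
      by (intro nonneg_bdd_above_summable_on bdd_aboveI[where M = ?bound]) auto
    then have "(\<Sum>\<^sub>\<infinity>y. b x y * f y) \<le> ?bound"
      using partial by (intro infsum_le_finite_sums) auto
    then show "schroedinger_op b c f x \<ge> 0"
      using schroedinger_op_eq[where b = b and x = x, OF row \<open>?summable\<close>] by simp
  qed
qed

lemma S_plus_eq:
  assumes "is_graph b c"
  shows "S_plus b c = {f. (\<forall>x. f x \<ge> 0) \<and> (\<exists>x. f x \<noteq> 0) \<and>
           (\<forall>x F. finite F \<longrightarrow> (\<Sum>y\<in>F. b x y * f y) \<le> ((\<Sum>\<^sub>\<infinity>y. b x y) + c x) * f x)}"
    (is "_ = ?partial_sums_bounded")
proof (intro set_eqI)
  fix f :: "'a \<Rightarrow> real"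
  show "f \<in> S_plus b c \<longleftrightarrow> f \<in> ?partial_sums_bounded"
  proof (cases "\<forall>x. f x \<ge> 0")
    case True
    then have "f \<in> dom_H b \<longleftrightarrow> (\<forall>x. (\<lambda>y. b x y * f y) summable_on UNIV)"
      by (simp add: dom_H_def)
    moreover have "((\<lambda>y. b x y * f y) summable_on UNIV \<and> schroedinger_op b c f x \<ge> 0)
        \<longleftrightarrow> (\<forall>F. finite F \<longrightarrow> (\<Sum>y\<in>F. b x y * f y) \<le> ((\<Sum>\<^sub>\<infinity>y. b x y) + c x) * f x)" for x
      using True by (intro schroedinger_op_nonneg_iff_finite_sums[OF assms]) auto
    ultimately show ?thesis
      using True unfolding S_plus_def by auto
  next
    case False
    then show ?thesis
      unfolding S_plus_def by auto
  qed
qed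

lemma closed_S_plus_normalized:
  assumes "is_graph b c"
  shows "closed {f \<in> S_plus b c. f x0 = 1}"
proof -
  have "{f \<in> S_plus b c. f x0 = 1} = {f. f x0 = 1} \<inter> (\<Inter>x. {f. f x \<ge> 0}) \<inter>
      (\<Inter>x. \<Inter>F\<in>{F. finite F}. {f. (\<Sum>y\<in>F. b x y * f y) \<le> ((\<Sum>\<^sub>\<infinity>y. b x y) + c x) * f x})"
    (is "?normalized = ?closed_conditions")
  proof
    show "?normalized \<subseteq> ?closed_conditions"
      unfolding S_plus_eq[OF assms] by blast
    show "?closed_conditions \<subseteq> ?normalized"
      unfolding S_plus_eq[OF assms] by (auto intro!: exI[of _ x0])
  qed
  also have "closed \<dots>"
    by (intro closed_Int closed_INT ballI closed_Collect_le closed_Collect_eq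
        continuous_intros continuous_on_product_coordinates)
  finally show ?thesis .
qed

lemma S_plus_neighbour_bound:
  assumes "is_graph b c" and "f \<in> S_plus b c" and "b x y > 0"
  shows "f y \<le> max 0 (((\<Sum>\<^sub>\<infinity>y. b x y) + c x) / b x y) * f x"
proof -
  let ?C = "((\<Sum>\<^sub>\<infinity>y. b x y) + c x) / b x y"
  have f_nonneg: "f x \<ge> 0"
    using assms(2) unfolding S_plus_def by blast
  have "(\<Sum>y\<in>{y}. b x y * f y) \<le> ((\<Sum>\<^sub>\<infinity>y. b x y) + c x) * f x"
    using assms(2) unfolding S_plus_eq[OF assms(1)] by blast
  then have "f y \<le> ?C * f x"
    using \<open>b x y > 0\<close> by (simp add: field_simps)
  also have "\<dots> \<le> max 0 ?C * f x"
    using f_nonneg by (intro mult_right_mono) auto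
  finally show ?thesis .
qed

lemma S_plus_harnack:
  assumes "is_graph b c" and "(\<lambda>u v. b u v > 0)\<^sup>*\<^sup>* x0 z"
  shows "\<exists>C\<ge>0. \<forall>f\<in>S_plus b c. f z \<le> C * f x0"
  using assms(2)
proof (induction rule: rtranclp_induct)
  case base
  show ?case
    by (intro exI[of _ 1]) simp
next
  case (step y w)
  then obtain C where "C \<ge> 0" and C: "\<forall>f\<in>S_plus b c. f y \<le> C * f x0"
    by blast
  let ?M = "max 0 (((\<Sum>\<^sub>\<infinity>v. b y v) + c y) / b y w)"
  have "f w \<le> (?M * C) * f x0" if "f \<in> S_plus b c" for f
  proof -
    have "f w \<le> ?M * f y"
      using S_plus_neighbour_bound[OF assms(1) that \<open>b y w > 0\<close>] .
    also have "\<dots> \<le> ?M * (C * f x0)"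
      using C that by (intro mult_left_mono) auto
    finally show ?thesis
      by (simp add: mult.assoc)
  qed
  then show ?case
    using \<open>C \<ge> 0\<close> by (intro exI[of _ "?M * C"]) auto
qed

theorem corollary2:
  fixes b :: "'a::countable \<Rightarrow> 'a \<Rightarrow> real" and c :: "'a \<Rightarrow> real" and x0 :: 'a
  assumes "is_graph b c" and "graph_connected b"
  shows "compact {f \<in> S_plus b c. f x0 = 1}"
proof (rule compact_if_closed_pointwise_bounded)
  show "closed {f \<in> S_plus b c. f x0 = 1}"
    using assms(1) by (rule closed_S_plus_normalized)
next
  fix z
  obtain C where "\<forall>f\<in>S_plus b c. f z \<le> C * f x0"
    using S_plus_harnack[OF assms(1)] assms(2) unfolding graph_connected_def by blast
  moreover have "f z \<ge> 0" if "f \<in> S_plus b c" for f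
    using that unfolding S_plus_def by blast
  ultimately show "\<exists>C. \<forall>f\<in>{f \<in> S_plus b c. f x0 = 1}. \<bar>f z\<bar> \<le> C"
    by (intro exI[of _ C]) auto
qed

end
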